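(* Let $V$ be a finite set (the vertex set of a graph or hypergraph). A \emph{bad setting} is a pair $(Z,c)$ with $Z\subset V$ and $c$ a coloring of $Z$ (with colors from $\mathbb{N}$); fix a family of bad settings. Let $\mathcal{Z}=\{Z\subset V:\ \exists c \text{ such that } (Z,c) \text{ is a bad setting}\}$, indexed as $\{Z_i\}_{i\in I}$ with $I\subset\mathbb{N}$ finite. For each $i\in I$ let $C_i=\{c: (Z_i,c)\text{ is a bad setting}\}$, and suppose there are integers $0\le k_i<|Z_i|$ and $m_i\ge 1$ such that for every vertex $v\in Z_i$ there is a set $K_{i,v}\subset Z_i\setminus\{v\}$ with $|K_{i,v}|=k_i$ such that every coloring of $K_{i,v}$ extends in at most $m_i$ ways to a coloring $c\in C_i$ of $Z_i$. Put $l_i=|Z_i|-k_i$ and $E=\{l\in\mathbb{N}:\exists i\in I,\ l_i=l\}$. For $l\in E$ and $v\in V$ let $Q_l(v)$ be the set of sets $Z_j\in\mathcal{Z}$ with $v\in Z_j$ and $l_j=l$, and let $d_l=\max_{v\in V}|Q_l(v)|$. Let $\phi_E(x)=1+\sum_{l\in E}x^l$, let $\tau>0$ satisfy $\phi_E(\tau)-\tau\phi_E'(\tau)=0$ (assumed to exist), and set $\gamma=\phi_E'(\tau)$. Then there exists a coloring of $V$ using $\left\lceil \gamma \sup_{i\in I}(d_{l_i}m_i)^{1/l_i}\right\rceil$ colors that avoids all bad settings, i.e. for no $i\in I$ is its restriction to $Z_i$ an element of $C_i$.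
   Context: A coloring of $V$ avoids a bad setting $(Z,c)$ if its restriction to $Z$ is not equal to $c$. *)

theory Defs
  imports "HOL-Analysis.Analysis"
begin

text \<open>A coloring of a set Z with colors from nat is an extensional function on Z
  (value undefined outside Z), i.e. an element of  extensional Z.\<close>

definition phiE :: "nat set \<Rightarrow> real \<Rightarrow> real" where
  "phiE E x = 1 + (\<Sum>l\<in>E. x ^ l)"

end

theory Submission
  imports Defs
begin

text \<open>Rosenfeld's counting method. Let \<open>C(U)\<close> be the set of colourings of \<open>U \<subseteq> V\<close> with \<open>N\<close>
  colours that avoid every bad setting contained in \<open>U\<close>. By induction on \<open>|U|\<close> one shows
  \<open>|C(U)| \<ge> \<beta> |C(U - {v})|\<close> for every \<open>v \<in> U\<close>: of the \<open>N |C(U - {v})|\<close> extensions of good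
  colourings of \<open>U - {v}\<close>, a bad one contains a bad setting \<open>Z\<^sub>j \<ni> v\<close>, and it is determined up to
  \<open>m\<^sub>j\<close> choices by its restriction to \<open>U - (Z\<^sub>j - K\<^sub>j\<^sub>,\<^sub>v)\<close>, a good colouring of a set with \<open>l\<^sub>j - 1\<close>
  vertices fewer than \<open>U - {v}\<close>; by induction there are at most \<open>|C(U - {v})| / \<beta>\<^bsup>l\<^sub>j - 1\<^esup>\<close> of
  those. Hence the ratio \<open>\<beta>\<close> propagates as long as \<open>\<beta> + \<Sum>\<^sub>v\<^sub>\<in>\<^sub>Z\<^sub>j m\<^sub>j / \<beta>\<^bsup>l\<^sub>j - 1\<^esup> \<le> N\<close> at every vertex.
  For \<open>\<beta> = M / \<tau>\<close>, with \<open>M\<close> the supremum in the statement, grouping the \<open>Z\<^sub>j\<close> by \<open>l\<^sub>j\<close> bounds the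
  left-hand side by \<open>M/\<tau> + \<Sum>\<^sub>l\<^sub>\<in>\<^sub>E M \<tau>\<^bsup>l - 1\<^esup>\<close>, which the equation defining \<open>\<tau>\<close> turns into \<open>\<gamma> M\<close>.\<close>

lemma card_le_mult_of_fibres_le:
  assumes "finite T" "f ` A \<subseteq> T"
    and "\<And>t. t \<in> T \<Longrightarrow> finite {x \<in> A. f x = t}"
    and "\<And>t. t \<in> T \<Longrightarrow> card {x \<in> A. f x = t} \<le> M"
  shows "card A \<le> M * card T"
proof -
  have "A = (\<Union>t\<in>T. {x \<in> A. f x = t})"
    using assms(2) by auto
  then have "card A \<le> (\<Sum>t\<in>T. card {x \<in> A. f x = t})"
    using card_UN_le[OF assms(1)] by metis
  also have "\<dots> \<le> (\<Sum>t\<in>T. M)"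
    using assms(4) by (rule sum_mono)
  finally show ?thesis
    by (simp add: mult.commute)
qed

lemma card_PiE_extensions:
  assumes "v \<in> U" "S \<subseteq> (U - {v}) \<rightarrow>\<^sub>E A"
  shows "card {g \<in> U \<rightarrow>\<^sub>E A. restrict g (U - {v}) \<in> S} = card A * card S"
proof -
  let ?extend = "\<lambda>(a, h). h(v := a)"
  have "{g \<in> U \<rightarrow>\<^sub>E A. restrict g (U - {v}) \<in> S} = ?extend ` (A \<times> S)"
  proof (intro equalityI subsetI)
    fix g
    assume g: "g \<in> {g \<in> U \<rightarrow>\<^sub>E A. restrict g (U - {v}) \<in> S}"
    then have "g = ?extend (g v, restrict g (U - {v}))"
      by (auto simp: PiE_iff extensional_def fun_eq_iff)
    moreover have "(g v, restrict g (U - {v})) \<in> A \<times> S"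
      using g assms(1) by auto
    ultimately show "g \<in> ?extend ` (A \<times> S)"
      by (rule image_eqI)
  next
    fix g
    assume "g \<in> ?extend ` (A \<times> S)"
    then obtain a h where "a \<in> A" "h \<in> S" "g = h(v := a)"
      by auto
    moreover have "h \<in> (U - {v}) \<rightarrow>\<^sub>E A"
      using \<open>h \<in> S\<close> assms(2) by blast
    then have "restrict (h(v := a)) (U - {v}) = h"
      by (simp add: restrict_PiE_iff restrict_fupd)
    ultimately show "g \<in> {g \<in> U \<rightarrow>\<^sub>E A. restrict g (U - {v}) \<in> S}"
      using assms(1) \<open>h \<in> (U - {v}) \<rightarrow>\<^sub>E A\<close> by (auto simp: PiE_iff extensional_def)
  qed
  moreover have "inj_on ?extend (A \<times> S)"
    using inj_combinator[of v "U - {v}" "\<lambda>_. A"] by (rule inj_on_subset) (use assms(2) in auto)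
  ultimately show ?thesis
    by (simp add: card_image card_cartesian_product)
qed

lemma iterated_ratio_le:
  fixes c :: "'a set \<Rightarrow> real"
  assumes ratio: "\<And>W w. W \<subseteq> U \<Longrightarrow> w \<in> W \<Longrightarrow> \<beta> * c (W - {w}) \<le> c W"
    and "\<beta> \<ge> 0" "finite D" "D \<subseteq> U"
  shows "\<beta> ^ card D * c (U - D) \<le> c U"
  using \<open>finite D\<close> \<open>D \<subseteq> U\<close>
proof (induction D rule: finite_induct)
  case empty
  then show ?case
    by simp
next
  case (insert x D)
  have "U - insert x D = U - D - {x}"
    by blast
  then have "\<beta> ^ card (insert x D) * c (U - insert x D) = \<beta> ^ card D * (\<beta> * c (U - D - {x}))"
    by (simp only: card_insert_disjoint[OF insert.hyps(1,2)] power_Suc mult_ac)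
  also have "\<dots> \<le> \<beta> ^ card D * c (U - D)"
    using ratio[of "U - D" x] insert \<open>\<beta> \<ge> 0\<close> by (intro mult_left_mono) auto
  also have "\<dots> \<le> c U"
    using insert by simp
  finally show ?case .
qed

lemma sum_grouped_by_level_le:
  fixes w :: "'i \<Rightarrow> real" and L :: "'i \<Rightarrow> nat" and b g :: "nat \<Rightarrow> real"
  assumes "finite J" "finite E" "L ` J \<subseteq> E"
    and "\<And>n. n \<in> E \<Longrightarrow> (\<Sum>j\<in>{j \<in> J. L j = n}. w j) \<le> b n"
    and "\<And>n. n \<in> E \<Longrightarrow> 0 \<le> g n"
  shows "(\<Sum>j\<in>J. w j * g (L j)) \<le> (\<Sum>n\<in>E. b n * g n)"
proof -
  have "(\<Sum>j\<in>J. w j * g (L j)) = (\<Sum>n\<in>E. \<Sum>j\<in>{j \<in> J. L j = n}. w j * g (L j))"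
    using assms(1-3) by (rule sum.group[symmetric])
  also have "\<dots> = (\<Sum>n\<in>E. (\<Sum>j\<in>{j \<in> J. L j = n}. w j) * g n)"
    by (simp add: sum_distrib_right)
  also have "\<dots> \<le> (\<Sum>n\<in>E. b n * g n)"
    using assms(4,5) by (intro sum_mono mult_right_mono)
  finally show ?thesis .
qed

lemma le_power_of_powr_inverse_le:
  fixes x M :: real
  assumes "0 \<le> x" "0 < n" "x powr (1 / n) \<le> M"
  shows "x \<le> M ^ n"
proof -
  have "x = root n x ^ n"
    using assms by simp
  also have "\<dots> \<le> M ^ n"
    using assms by (intro power_mono) (simp_all add: root_powr_inverse)
  finally show ?thesis .
qed

lemma has_real_derivative_phiE:
  "(phiE E has_real_derivative (\<Sum>n\<in>E. real n * x ^ (n - 1))) (at x)"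
proof -
  have "((\<lambda>x. 1 + (\<Sum>n\<in>E. x ^ n)) has_real_derivative 0 + (\<Sum>n\<in>E. real n * x ^ (n - Suc 0))) (at x)"
    by (intro DERIV_add DERIV_const DERIV_sum DERIV_pow)
  then show ?thesis
    by (simp add: phiE_def [abs_def])
qed

lemma deriv_phiE: "deriv (phiE E) x = (\<Sum>n\<in>E. real n * x ^ (n - 1))"
  by (rule DERIV_imp_deriv) (rule has_real_derivative_phiE)

lemma phiE_tangent_nonempty:
  assumes "phiE E \<tau> - \<tau> * deriv (phiE E) \<tau> = 0"
  shows "E \<noteq> {}"
proof
  assume "E = {}"
  then show False
    using assms by (simp add: phiE_def deriv_phiE)
qed

lemma phiE_tangent_identity:
  fixes M \<tau> :: real
  assumes "0 \<notin> E" "\<tau> > 0" "phiE E \<tau> - \<tau> * deriv (phiE E) \<tau> = 0"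
  shows "M / \<tau> + (\<Sum>n\<in>E. M ^ n / (M / \<tau>) ^ (n - 1)) = deriv (phiE E) \<tau> * M"
proof -
  have power_quotient: "M ^ n / (M / \<tau>) ^ (n - 1) = M / \<tau> * \<tau> ^ n" if "n \<in> E" for n
  proof -
    have "n \<noteq> 0"
      using that assms(1) by metis
    then obtain q where "n = Suc q"
      using not0_implies_Suc by blast
    then show ?thesis
      using \<open>\<tau> > 0\<close> by (cases "M = 0") (simp_all add: power_divide)
  qed
  have "(\<Sum>n\<in>E. M ^ n / (M / \<tau>) ^ (n - 1)) = M / \<tau> * (\<Sum>n\<in>E. \<tau> ^ n)"
    using power_quotient by (simp add: sum_distrib_left)
  also have "\<dots> = M / \<tau> * (\<tau> * deriv (phiE E) \<tau> - 1)"
    using assms(3) by (simp add: phiE_def)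
  finally show ?thesis
    using \<open>\<tau> > 0\<close> by (simp add: field_simps)
qed

locale bad_setting_family =
  fixes V :: "'a set" and B :: "('a set \<times> ('a \<Rightarrow> nat)) set" and I :: "nat set"
    and Zs :: "nat \<Rightarrow> 'a set" and k m :: "nat \<Rightarrow> nat"
  assumes finite_V: "finite V" and finite_I: "finite I"
    and Zs_subset: "i \<in> I \<Longrightarrow> Zs i \<subseteq> V"
    and k_less: "i \<in> I \<Longrightarrow> k i < card (Zs i)"
    and m_pos: "i \<in> I \<Longrightarrow> 0 < m i"
    and kernel_exists: "i \<in> I \<Longrightarrow> v \<in> Zs i \<Longrightarrow> \<exists>K. K \<subseteq> Zs i - {v} \<and> card K = k i \<and>
          (\<forall>g\<in>extensional K. finite {c. (Zs i, c) \<in> B \<and> restrict c K = g} \<and>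
             card {c. (Zs i, c) \<in> B \<and> restrict c K = g} \<le> m i)"
begin

definition level :: "nat \<Rightarrow> nat" where
  "level i = card (Zs i) - k i"

definition kernel :: "nat \<Rightarrow> 'a \<Rightarrow> 'a set" where
  "kernel i v = (SOME K. K \<subseteq> Zs i - {v} \<and> card K = k i \<and>
     (\<forall>g\<in>extensional K. finite {c. (Zs i, c) \<in> B \<and> restrict c K = g} \<and>
        card {c. (Zs i, c) \<in> B \<and> restrict c K = g} \<le> m i))"

lemma
  assumes "i \<in> I" "v \<in> Zs i"
  shows kernel_subset: "kernel i v \<subseteq> Zs i - {v}"
    and card_Zs_diff_kernel: "card (Zs i - kernel i v) = level i"
    and finite_bad_extensions: "g \<in> extensional (kernel i v) \<Longrightarrow>
          finite {c. (Zs i, c) \<in> B \<and> restrict c (kernel i v) = g}"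
    and card_bad_extensions: "g \<in> extensional (kernel i v) \<Longrightarrow>
          card {c. (Zs i, c) \<in> B \<and> restrict c (kernel i v) = g} \<le> m i"
proof -
  note kernel = someI_ex[OF kernel_exists[OF assms], folded kernel_def]
  then show "kernel i v \<subseteq> Zs i - {v}"
    "g \<in> extensional (kernel i v) \<Longrightarrow> finite {c. (Zs i, c) \<in> B \<and> restrict c (kernel i v) = g}"
    "g \<in> extensional (kernel i v) \<Longrightarrow> card {c. (Zs i, c) \<in> B \<and> restrict c (kernel i v) = g} \<le> m i"
    by auto
  have "kernel i v \<subseteq> Zs i" "finite (Zs i)"
    using kernel Zs_subset[OF assms(1)] finite_V finite_subset by auto
  with kernel show "card (Zs i - kernel i v) = level i"
    unfolding level_def by (metis card_Diff_subset finite_subset)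
qed

lemma Zs_nonempty: "i \<in> I \<Longrightarrow> Zs i \<noteq> {}"
  using k_less by fastforce

lemma level_pos: "i \<in> I \<Longrightarrow> 0 < level i"
  using k_less by (simp add: level_def)

definition good_colorings :: "nat \<Rightarrow> 'a set \<Rightarrow> ('a \<Rightarrow> nat) set" where
  "good_colorings N U =
     {g \<in> U \<rightarrow>\<^sub>E {..<N}. \<forall>j\<in>I. Zs j \<subseteq> U \<longrightarrow> (Zs j, restrict g (Zs j)) \<notin> B}"

lemma good_colorings_subset: "good_colorings N U \<subseteq> U \<rightarrow>\<^sub>E {..<N}"
  by (auto simp: good_colorings_def)

lemma finite_good_colorings: "finite U \<Longrightarrow> finite (good_colorings N U)"
  by (rule finite_subset[OF good_colorings_subset]) (simp add: finite_PiE)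

lemma good_colorings_empty: "good_colorings N {} = {\<lambda>_. undefined}"
  using Zs_nonempty by (auto simp: good_colorings_def)

lemma restrict_good_colorings:
  assumes "W \<subseteq> U" "g \<in> good_colorings N U"
  shows "restrict g W \<in> good_colorings N W"
proof -
  have "restrict (restrict g W) (Zs j) = restrict g (Zs j)" if "Zs j \<subseteq> W" for j
    using that by (auto simp: restrict_def fun_eq_iff)
  with assms show ?thesis
    by (auto simp: good_colorings_def PiE_iff)
qed

lemma card_bad_through_le:
  assumes "finite U" "j \<in> I" "v \<in> Zs j" "Zs j \<subseteq> U"
  defines "S \<equiv> Zs j - kernel j v"
  shows "card {g \<in> U \<rightarrow>\<^sub>E {..<N}. restrict g (U - S) \<in> good_colorings N (U - S) \<and>
                (Zs j, restrict g (Zs j)) \<in> B}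
         \<le> m j * card (good_colorings N (U - S))"
    (is "card ?F \<le> _")
proof (rule card_le_mult_of_fibres_le[where f = "\<lambda>g. restrict g (U - S)"])
  show "finite (good_colorings N (U - S))"
    using \<open>finite U\<close> by (simp add: finite_good_colorings)
  show "(\<lambda>g. restrict g (U - S)) ` ?F \<subseteq> good_colorings N (U - S)"
    by auto
  fix h
  assume "h \<in> good_colorings N (U - S)"
  let ?fibre = "{g \<in> ?F. restrict g (U - S) = h}"
  let ?bad = "{c. (Zs j, c) \<in> B \<and> restrict c (kernel j v) = restrict h (kernel j v)}"
  have K: "kernel j v \<subseteq> Zs j" "kernel j v \<subseteq> U - S"
    using kernel_subset[OF \<open>j \<in> I\<close> \<open>v \<in> Zs j\<close>] \<open>Zs j \<subseteq> U\<close> unfolding S_def by auto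
  have "inj_on (\<lambda>g. restrict g (Zs j)) ?fibre"
  proof (rule inj_onI)
    fix g1 g2
    assume g: "g1 \<in> ?fibre" "g2 \<in> ?fibre" and eq: "restrict g1 (Zs j) = restrict g2 (Zs j)"
    show "g1 = g2"
    proof (rule extensionalityI[of _ U])
      fix x
      assume "x \<in> U"
      show "g1 x = g2 x"
      proof (cases "x \<in> S")
        case True
        then show ?thesis
          using fun_cong[OF eq, of x] unfolding S_def by simp
      next
        case False
        have "restrict g1 (U - S) x = restrict g2 (U - S) x"
          using g by simp
        then show ?thesis
          using False \<open>x \<in> U\<close> by simp
      qed
    qed (use g in \<open>auto simp: PiE_iff\<close>)
  qed
  moreover have "(\<lambda>g. restrict g (Zs j)) ` ?fibre \<subseteq> ?bad"
  proof (rule image_subsetI)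
    fix g
    assume "g \<in> ?fibre"
    then have "restrict (restrict g (U - S)) (kernel j v) = restrict h (kernel j v)"
      by simp
    then show "restrict g (Zs j) \<in> ?bad"
      using \<open>g \<in> ?fibre\<close> K by (simp add: Int_absorb1 Int_absorb2)
  qed
  moreover have "finite ?bad" "card ?bad \<le> m j"
    using finite_bad_extensions card_bad_extensions \<open>j \<in> I\<close> \<open>v \<in> Zs j\<close> by auto
  ultimately show "card ?fibre \<le> m j"
    using card_inj_on_le order_trans by blast
  show "finite ?fibre"
    using \<open>finite U\<close> by (auto intro: finite_subset[of _ "U \<rightarrow>\<^sub>E {..<N}"] simp: finite_PiE)
qed

lemma card_extensions_le:
  assumes "finite U" "v \<in> U"
  shows "N * card (good_colorings N (U - {v})) \<le> card (good_colorings N U) +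
     (\<Sum>j\<in>{j \<in> I. Zs j \<subseteq> U \<and> v \<in> Zs j}. m j * card (good_colorings N (U - (Zs j - kernel j v))))"
proof -
  let ?C = "good_colorings N"
  let ?J = "{j \<in> I. Zs j \<subseteq> U \<and> v \<in> Zs j}"
  let ?G = "{g \<in> U \<rightarrow>\<^sub>E {..<N}. restrict g (U - {v}) \<in> ?C (U - {v})}"
  let ?F = "\<lambda>j. {g \<in> U \<rightarrow>\<^sub>E {..<N}. restrict g (U - (Zs j - kernel j v)) \<in> ?C (U - (Zs j - kernel j v)) \<and>
                 (Zs j, restrict g (Zs j)) \<in> B}"
  have "?G \<subseteq> ?C U \<union> (\<Union>j\<in>?J. ?F j)"
  proof
    fix g
    assume g: "g \<in> ?G"
    show "g \<in> ?C U \<union> (\<Union>j\<in>?J. ?F j)"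
    proof (cases "g \<in> ?C U")
      case False
      then obtain j where j: "j \<in> I" "Zs j \<subseteq> U" "(Zs j, restrict g (Zs j)) \<in> B"
        using g by (auto simp: good_colorings_def)
      have "v \<in> Zs j"
      proof (rule ccontr)
        assume "v \<notin> Zs j"
        then have "restrict (restrict g (U - {v})) (Zs j) = restrict g (Zs j)"
          using j by (simp add: Int_absorb1 subset_Diff_insert)
        then show False
          using g j \<open>v \<notin> Zs j\<close> by (auto simp: good_colorings_def)
      qed
      have "U - (Zs j - kernel j v) \<subseteq> U - {v}"
        using kernel_subset[OF \<open>j \<in> I\<close> \<open>v \<in> Zs j\<close>] \<open>v \<in> Zs j\<close> by auto
      then have "restrict (restrict g (U - {v})) (U - (Zs j - kernel j v)) \<in> ?C (U - (Zs j - kernel j v))"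
        using g by (blast intro: restrict_good_colorings)
      then have "g \<in> ?F j"
        using g j \<open>U - (Zs j - kernel j v) \<subseteq> U - {v}\<close> by (simp add: Int_absorb1)
      then show ?thesis
        using j \<open>v \<in> Zs j\<close> by blast
    qed simp
  qed
  moreover have "finite (\<Union>j\<in>?J. ?F j)"
    using \<open>finite U\<close> by (auto intro: finite_subset[of _ "U \<rightarrow>\<^sub>E {..<N}"] simp: finite_PiE)
  ultimately have "card ?G \<le> card (?C U \<union> (\<Union>j\<in>?J. ?F j))"
    using \<open>finite U\<close> by (intro card_mono) (simp_all add: finite_good_colorings)
  also have "\<dots> \<le> card (?C U) + card (\<Union>j\<in>?J. ?F j)"
    by (rule card_Un_le)
  also have "\<dots> \<le> card (?C U) + (\<Sum>j\<in>?J. card (?F j))"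
    using finite_I by (intro add_left_mono card_UN_le) simp
  also have "\<dots> \<le> card (?C U) + (\<Sum>j\<in>?J. m j * card (?C (U - (Zs j - kernel j v))))"
    using card_bad_through_le \<open>finite U\<close> by (intro add_left_mono sum_mono) auto
  finally show ?thesis
    using card_PiE_extensions[OF \<open>v \<in> U\<close> good_colorings_subset] by simp
qed

lemma card_good_colorings_remove_ge:
  fixes \<beta> :: real
  assumes "\<beta> > 0"
    and weight: "\<And>v. v \<in> V \<Longrightarrow> \<beta> + (\<Sum>j\<in>{j \<in> I. v \<in> Zs j}. real (m j) / \<beta> ^ (level j - 1)) \<le> real N"
    and "U \<subseteq> V" "v \<in> U"
  shows "\<beta> * card (good_colorings N (U - {v})) \<le> card (good_colorings N U)"
  using \<open>U \<subseteq> V\<close> \<open>v \<in> U\<close>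
proof (induction "card U" arbitrary: U v rule: less_induct)
  case less
  let ?c = "\<lambda>W. real (card (good_colorings N W))"
  let ?J = "{j \<in> I. Zs j \<subseteq> U \<and> v \<in> Zs j}"
  let ?J' = "{j \<in> I. v \<in> Zs j}"
  have "finite U"
    using less.prems finite_V finite_subset by blast
  have ratio: "\<beta> * ?c (W - {w}) \<le> ?c W" if "W \<subseteq> U - {v}" "w \<in> W" for W w
  proof (rule less.hyps)
    have "card W \<le> card (U - {v})"
      using that \<open>finite U\<close> by (intro card_mono) auto
    also have "\<dots> < card U"
      using \<open>finite U\<close> less.prems by (intro card_Diff1_less)
    finally show "card W < card U" .
  qed (use that less.prems in auto)
  have through_j: "real (m j * card (good_colorings N (U - (Zs j - kernel j v))))
                     \<le> real (m j) / \<beta> ^ (level j - 1) * ?c (U - {v})" if "j \<in> ?J" for j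
  proof -
    define D where "D = Zs j - kernel j v - {v}"
    have "v \<in> Zs j - kernel j v" "finite (Zs j)"
      using that kernel_subset[of j v] \<open>finite U\<close> finite_subset by auto
    then have "card D = level j - 1" "finite D" "U - {v} - D = U - (Zs j - kernel j v)"
      using that card_Zs_diff_kernel[of j v] unfolding D_def by auto
    moreover have "\<beta> ^ card D * ?c (U - {v} - D) \<le> ?c (U - {v})"
      using that \<open>\<beta> > 0\<close> \<open>finite D\<close> unfolding D_def
      by (intro iterated_ratio_le[where c = ?c] ratio) auto
    ultimately have "?c (U - (Zs j - kernel j v)) \<le> ?c (U - {v}) / \<beta> ^ (level j - 1)"
      using \<open>\<beta> > 0\<close> by (simp add: field_simps)
    then have "real (m j) * ?c (U - (Zs j - kernel j v)) \<le> real (m j) * (?c (U - {v}) / \<beta> ^ (level j - 1))"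
      by (rule mult_left_mono) simp
    then show ?thesis
      by simp
  qed
  have "real N * ?c (U - {v}) \<le> ?c U + (\<Sum>j\<in>?J. real (m j * card (good_colorings N (U - (Zs j - kernel j v)))))"
    using card_extensions_le[OF \<open>finite U\<close> \<open>v \<in> U\<close>, of N] by (simp flip: of_nat_mult of_nat_sum of_nat_add)
  also have "\<dots> \<le> ?c U + (\<Sum>j\<in>?J. real (m j) / \<beta> ^ (level j - 1) * ?c (U - {v}))"
    using through_j by (intro add_left_mono sum_mono)
  also have "\<dots> \<le> ?c U + (\<Sum>j\<in>?J'. real (m j) / \<beta> ^ (level j - 1) * ?c (U - {v}))"
    using finite_I \<open>\<beta> > 0\<close> by (intro add_left_mono sum_mono2) auto
  also have "\<dots> = ?c U + (\<Sum>j\<in>?J'. real (m j) / \<beta> ^ (level j - 1)) * ?c (U - {v})"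
    by (simp add: sum_distrib_right)
  also have "\<dots> \<le> ?c U + (real N - \<beta>) * ?c (U - {v})"
    using weight[of v] less.prems by (intro add_left_mono mult_right_mono) auto
  finally show ?case
    by (simp add: algebra_simps)
qed

lemma good_colorings_nonempty:
  fixes \<beta> :: real
  assumes "\<beta> > 0"
    and "\<And>v. v \<in> V \<Longrightarrow> \<beta> + (\<Sum>j\<in>{j \<in> I. v \<in> Zs j}. real (m j) / \<beta> ^ (level j - 1)) \<le> real N"
  shows "good_colorings N V \<noteq> {}"
proof -
  have "\<beta> ^ card V * card (good_colorings N (V - V)) \<le> card (good_colorings N V)"
    using assms finite_V
    by (intro iterated_ratio_le[where c = "\<lambda>W. real (card (good_colorings N W))"]
        card_good_colorings_remove_ge) auto
  moreover have "\<beta> ^ card V * card (good_colorings N (V - V)) > 0"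
    using \<open>\<beta> > 0\<close> by (simp add: good_colorings_empty)
  ultimately show ?thesis
    by auto
qed

definition level_degree :: "nat \<Rightarrow> nat" where
  "level_degree n = Max ((\<lambda>v. card {j \<in> I. v \<in> Zs j \<and> level j = n}) ` V)"

definition degree_root_bound :: real where
  "degree_root_bound = (SUP i\<in>I. (real (level_degree (level i)) * real (m i)) powr (1 / real (level i)))"

lemma card_level_le_level_degree:
  "v \<in> V \<Longrightarrow> card {j \<in> I. v \<in> Zs j \<and> level j = n} \<le> level_degree n"
  unfolding level_degree_def using finite_V by (intro Max_ge) auto

lemma level_degree_pos:
  assumes "i \<in> I"
  shows "0 < level_degree (level i)"
proof -
  obtain v where "v \<in> Zs i"
    using Zs_nonempty[OF assms] by blast
  then have "0 < card {j \<in> I. v \<in> Zs j \<and> level j = level i}"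
    using assms finite_I by (auto simp: card_gt_0_iff)
  also have "\<dots> \<le> level_degree (level i)"
    using \<open>v \<in> Zs i\<close> Zs_subset[OF assms] by (intro card_level_le_level_degree) auto
  finally show ?thesis .
qed

lemma level_degree_mult_le:
  assumes "i \<in> I"
  shows "real (level_degree (level i)) * real (m i) \<le> degree_root_bound ^ level i"
proof (rule le_power_of_powr_inverse_le)
  show "(real (level_degree (level i)) * real (m i)) powr (1 / real (level i)) \<le> degree_root_bound"
    unfolding degree_root_bound_def using assms finite_I by (intro cSUP_upper) auto
qed (use assms level_pos in auto)

lemma degree_root_bound_pos:
  assumes "I \<noteq> {}"
  shows "0 < degree_root_bound"
proof -
  obtain i where "i \<in> I"
    using assms by blast
  then have "0 < (real (level_degree (level i)) * real (m i)) powr (1 / real (level i))"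
    using level_degree_pos m_pos by simp
  also have "\<dots> \<le> degree_root_bound"
    unfolding degree_root_bound_def using \<open>i \<in> I\<close> finite_I by (intro cSUP_upper) auto
  finally show ?thesis .
qed

lemma level_sum_le:
  assumes "I \<noteq> {}" "v \<in> V"
  shows "(\<Sum>j\<in>{j \<in> I. v \<in> Zs j \<and> level j = n}. real (m j)) \<le> degree_root_bound ^ n"
proof (cases "{j \<in> I. v \<in> Zs j \<and> level j = n} = {}")
  case True
  have "0 \<le> degree_root_bound ^ n"
    using degree_root_bound_pos[OF assms(1)] by simp
  then show ?thesis
    by (simp only: True sum.empty)
next
  case False
  let ?A = "{j \<in> I. v \<in> Zs j \<and> level j = n}"
  let ?d = "real (level_degree n)"
  obtain j0 where "j0 \<in> ?A"
    using False by blast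
  then have "0 < ?d"
    using level_degree_pos by fastforce
  have "?d * (\<Sum>j\<in>?A. real (m j)) = (\<Sum>j\<in>?A. real (level_degree (level j)) * real (m j))"
    by (simp add: sum_distrib_left)
  also have "\<dots> \<le> (\<Sum>j\<in>?A. degree_root_bound ^ n)"
    using level_degree_mult_le by (intro sum_mono) fastforce
  also have "\<dots> = real (card ?A) * degree_root_bound ^ n"
    by simp
  also have "\<dots> \<le> ?d * degree_root_bound ^ n"
    using card_level_le_level_degree[OF assms(2)] degree_root_bound_pos[OF assms(1)]
    by (intro mult_right_mono) auto
  finally show ?thesis
    using \<open>0 < ?d\<close> by simp
qed

lemma weighted_degree_le:
  fixes \<tau> :: real
  defines "\<beta> \<equiv> degree_root_bound / \<tau>"
  assumes "\<tau> > 0" and tangent: "phiE (level ` I) \<tau> - \<tau> * deriv (phiE (level ` I)) \<tau> = 0" and "v \<in> V"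
  shows "\<beta> + (\<Sum>j\<in>{j \<in> I. v \<in> Zs j}. real (m j) / \<beta> ^ (level j - 1))
           \<le> deriv (phiE (level ` I)) \<tau> * degree_root_bound"
proof -
  have "I \<noteq> {}"
    using phiE_tangent_nonempty[OF tangent] by blast
  then have "\<beta> > 0"
    unfolding \<beta>_def using degree_root_bound_pos \<open>\<tau> > 0\<close> by simp
  have "0 \<notin> level ` I"
    using level_pos by fastforce
  have "(\<Sum>j\<in>{j \<in> I. v \<in> Zs j}. real (m j) * (1 / \<beta> ^ (level j - 1)))
          \<le> (\<Sum>n\<in>level ` I. degree_root_bound ^ n * (1 / \<beta> ^ (n - 1)))"
    using finite_I level_sum_le[OF \<open>I \<noteq> {}\<close> \<open>v \<in> V\<close>] \<open>\<beta> > 0\<close>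
    by (intro sum_grouped_by_level_le) (auto simp: conj_assoc)
  also have "\<dots> = (\<Sum>n\<in>level ` I. degree_root_bound ^ n / \<beta> ^ (n - 1))"
    by simp
  also have "\<beta> + \<dots> = deriv (phiE (level ` I)) \<tau> * degree_root_bound"
    unfolding \<beta>_def using \<open>0 \<notin> level ` I\<close> \<open>\<tau> > 0\<close> tangent by (rule phiE_tangent_identity)
  finally show ?thesis
    by simp
qed

end

theorem theorem1:
  fixes V :: "'a set"
    and B :: "('a set \<times> ('a \<Rightarrow> nat)) set"
    and I :: "nat set"
    and Zs :: "nat \<Rightarrow> 'a set"
    and k m :: "nat \<Rightarrow> nat"
    and \<tau> :: real
  assumes finV: "finite V"
    and bad: "\<forall>(Z, c)\<in>B. Z \<subseteq> V \<and> c \<in> extensional Z"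
    and finI: "finite I"
    and idx: "bij_betw Zs I (fst ` B)"
    and k_lt: "\<forall>i\<in>I. k i < card (Zs i)"
    and m_pos: "\<forall>i\<in>I. m i \<ge> 1"
    and ext: "\<forall>i\<in>I. \<forall>v\<in>Zs i. \<exists>K. K \<subseteq> Zs i - {v} \<and> card K = k i \<and>
               (\<forall>g\<in>extensional K.
                  finite {c. (Zs i, c) \<in> B \<and> restrict c K = g} \<and>
                  card {c. (Zs i, c) \<in> B \<and> restrict c K = g} \<le> m i)"
    and tau_pos: "\<tau> > 0"
    and tau_eq: "phiE ((\<lambda>i. card (Zs i) - k i) ` I) \<tau>
                   - \<tau> * deriv (phiE ((\<lambda>i. card (Zs i) - k i) ` I)) \<tau> = 0"
  shows "\<exists>f :: 'a \<Rightarrow> nat. f \<in> extensional V \<and>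
     card (f ` V) \<le>
       nat \<lceil>deriv (phiE ((\<lambda>i. card (Zs i) - k i) ` I)) \<tau> *
          (SUP i\<in>I. (real (Max ((\<lambda>v. card {j\<in>I. v \<in> Zs j \<and>
                         card (Zs j) - k j = card (Zs i) - k i}) ` V)) * real (m i))
                    powr (1 / real (card (Zs i) - k i)))\<rceil> \<and>
     (\<forall>i\<in>I. (Zs i, restrict f (Zs i)) \<notin> B)"
proof -
  have Zs_subset: "Zs i \<subseteq> V" if "i \<in> I" for i
  proof -
    obtain c where "(Zs i, c) \<in> B"
      using idx \<open>i \<in> I\<close> unfolding bij_betw_def by force
    then show ?thesis
      using bad by blast
  qed
  interpret bad_setting_family V B I Zs k m
    using finV finI Zs_subset k_lt m_pos ext by unfold_locales auto
  have level_eq: "level = (\<lambda>i. card (Zs i) - k i)"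
    by (simp add: level_def fun_eq_iff)
  have tangent: "phiE (level ` I) \<tau> - \<tau> * deriv (phiE (level ` I)) \<tau> = 0"
    using tau_eq unfolding level_eq .
  define N where "N = nat \<lceil>deriv (phiE (level ` I)) \<tau> * degree_root_bound\<rceil>"
  have "0 < degree_root_bound / \<tau>"
    using degree_root_bound_pos phiE_tangent_nonempty[OF tangent] tau_pos by simp
  then have "good_colorings N V \<noteq> {}"
    using weighted_degree_le[OF tau_pos tangent] real_nat_ceiling_ge order_trans unfolding N_def
    by (intro good_colorings_nonempty) blast+
  then obtain f where f: "f \<in> good_colorings N V"
    by blast
  then have "f \<in> V \<rightarrow>\<^sub>E {..<N}"
    using good_colorings_subset by blast
  then have "f \<in> extensional V" "card (f ` V) \<le> N"
    using card_mono[of "{..<N}" "f ` V"] by (auto simp: PiE_iff)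
  moreover have "\<forall>i\<in>I. (Zs i, restrict f (Zs i)) \<notin> B"
    using f Zs_subset by (auto simp: good_colorings_def)
  ultimately have "\<exists>f. f \<in> extensional V \<and> card (f ` V) \<le> N \<and> (\<forall>i\<in>I. (Zs i, restrict f (Zs i)) \<notin> B)"
    by blast
  then show ?thesis
    unfolding N_def degree_root_bound_def level_degree_def level_eq .
qed

end
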